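(* Let $\lambda,\lambda_1,\sigma,\sigma_1\in\mathbb{C}^*$ and $\eta,\eta_1\in\mathbb{C}$. Then: (1) $\Omega(\lambda,\eta,\sigma,0)\cong\Omega(\lambda_1,\eta_1,\sigma_1,0)$ as $\mathcal{G}$-modules if and only if $\lambda=\lambda_1,\eta=\eta_1,\sigma=\sigma_1$; (2) $\Omega(\lambda,\eta,0,\sigma)\cong\Omega(\lambda_1,\eta_1,0,\sigma_1)$ if and only if $\lambda=\lambda_1,\eta=\eta_1,\sigma=\sigma_1$; (3) $\Omega(\lambda,\eta,\sigma,0)$ and $\Omega(\lambda_1,\eta_1,0,\sigma_1)$ are not isomorphic.
   Context: $\mathcal{G}$ is the complex Lie algebra with basis $\{L_n,H_n,I_n,J_n,\mathbf{c}_1,\mathbf{c}_2,\mathbf{c}_3: n\in\mathbb{Z}\}$ whose brackets of basis elements are $[L_m,L_n]=(n-m)L_{m+n}+\frac{m^3-m}{12}\delta_{m+n,0}\mathbf{c}_1$, $[L_m,H_n]=nH_{m+n}+m^2\delta_{m+n,0}\mathbf{c}_2$, $[H_m,H_n]=m\delta_{m+n,0}\mathbf{c}_3$, $[L_m,I_n]=(n-m)I_{m+n}$, $[L_m,J_n]=(n-m)J_{m+n}$, $[H_m,I_n]=I_{m+n}$, $[H_m,J_n]=-J_{m+n}$ (and antisymmetric counterparts), all other brackets of basis elements zero. For $\lambda\in\mathbb{C}^*,\eta\in\mathbb{C}$, $\sigma\in\mathbb{C}^*$: $\Omega(\lambda,\eta,\sigma,0)$ is $\mathbb{C}[X,Y]$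 with $L_mf(X,Y)=\lambda^mf(X,Y-m)(Y-mX+m\eta)$, $H_mf=\lambda^mXf(X,Y-m)$, $I_mf=\lambda^m\sigma f(X-1,Y-m)$, and $J_m,\mathbf{c}_1,\mathbf{c}_2,\mathbf{c}_3$ acting as $0$; $\Omega(\lambda,\eta,0,\sigma)$ is $\mathbb{C}[X,Y]$ with $L_mf=\lambda^mf(X,Y-m)(Y+mX+m\eta)$, $H_mf=\lambda^mXf(X,Y-m)$, $J_mf=\lambda^m\sigma f(X+1,Y-m)$, and $I_m,\mathbf{c}_1,\mathbf{c}_2,\mathbf{c}_3$ acting as $0$ ($m\in\mathbb{Z}$). *)

theory Defs
  imports "HOL-Computational_Algebra.Polynomial"
begin

datatype gbasis = L int | H int | I int | J int | C1 | C2 | C3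

text \<open>C[X,Y] is represented as polynomials in Y with coefficients in C[X].\<close>
type_synonym cxy = "complex poly poly"

definition polyX :: cxy where "polyX = [:[:0, 1:]:]"
definition polyY :: cxy where "polyY = [:0, 1:]"
definition constp :: "complex \<Rightarrow> cxy" where "constp c = [:[:c:]:]"

text \<open>f(X + a, Y + b)\<close>
definition shiftXY :: "complex \<Rightarrow> complex \<Rightarrow> cxy \<Rightarrow> cxy" where
  "shiftXY a b f = pcompose (map_poly (\<lambda>c. pcompose c [:a, 1:]) f) [:[:b:], 1:]"

text \<open>Omega(lambda, eta, sigma, 0): action of basis elements.\<close>
definition omegaI :: "complex \<Rightarrow> complex \<Rightarrow> complex \<Rightarrow> gbasis \<Rightarrow> cxy \<Rightarrow> cxy" where
  "omegaI lam eta sig b f = (case b of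
     L m \<Rightarrow> constp (lam powi m) * shiftXY 0 (- of_int m) f
              * (polyY - constp (of_int m) * polyX + constp (of_int m * eta))
   | H m \<Rightarrow> constp (lam powi m) * polyX * shiftXY 0 (- of_int m) f
   | I m \<Rightarrow> constp (lam powi m * sig) * shiftXY (-1) (- of_int m) f
   | J m \<Rightarrow> 0
   | C1 \<Rightarrow> 0 | C2 \<Rightarrow> 0 | C3 \<Rightarrow> 0)"

text \<open>Omega(lambda, eta, 0, sigma): action of basis elements.\<close>
definition omegaJ :: "complex \<Rightarrow> complex \<Rightarrow> complex \<Rightarrow> gbasis \<Rightarrow> cxy \<Rightarrow> cxy" where
  "omegaJ lam eta sig b f = (case b of
     L m \<Rightarrow> constp (lam powi m) * shiftXY 0 (- of_int m) f
              * (polyY + constp (of_int m) * polyX + constp (of_int m * eta))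
   | H m \<Rightarrow> constp (lam powi m) * polyX * shiftXY 0 (- of_int m) f
   | I m \<Rightarrow> 0
   | J m \<Rightarrow> constp (lam powi m * sig) * shiftXY 1 (- of_int m) f
   | C1 \<Rightarrow> 0 | C2 \<Rightarrow> 0 | C3 \<Rightarrow> 0)"

text \<open>Isomorphism of G-modules on the common underlying space C[X,Y]: a C-linear bijection
  intertwining the actions of all basis elements (hence of all of G, by linearity).\<close>
definition gmod_iso :: "(gbasis \<Rightarrow> cxy \<Rightarrow> cxy) \<Rightarrow> (gbasis \<Rightarrow> cxy \<Rightarrow> cxy) \<Rightarrow> bool" where
  "gmod_iso \<rho>1 \<rho>2 \<longleftrightarrow> (\<exists>\<phi>. (\<forall>f g. \<phi> (f + g) = \<phi> f + \<phi> g)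
      \<and> (\<forall>c f. \<phi> (constp c * f) = constp c * \<phi> f)
      \<and> bij \<phi>
      \<and> (\<forall>b f. \<phi> (\<rho>1 b f) = \<rho>2 b (\<phi> f)))"

end

theory Submission
  imports Defs
begin

text \<open>An isomorphism \<open>\<phi>\<close> commutes with \<open>H\<^sub>0\<close> and \<open>L\<^sub>0\<close>, which act on every module in question
  as multiplication by \<open>X\<close> and \<open>Y\<close>. Being additive and \<open>\<complex>\<close>-linear, \<open>\<phi>\<close> is therefore a
  \<open>\<complex>[X,Y]\<close>-module endomorphism of the free module \<open>\<complex>[X,Y]\<close>, i.e. multiplication by \<open>\<phi> 1\<close>, and
  bijectivity makes \<open>\<phi> 1\<close> a nonzero constant. Hence isomorphic modules of this kind agree on
  \<open>b \<cdot> 1\<close> for every basis element \<open>b\<close>, and the parameters can be read off from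
  \<open>H\<^sub>1 \<cdot> 1 = \<lambda>X\<close>, \<open>L\<^sub>1 \<cdot> 1 = \<lambda>(Y \<mp> X + \<eta>)\<close>, \<open>I\<^sub>0 \<cdot> 1\<close> and \<open>J\<^sub>0 \<cdot> 1\<close>.\<close>

lemma constp_mult_eq_smult: "constp c * f = smult [:c:] f"
  by (simp add: constp_def)

lemma constp_1 [simp]: "constp 1 = 1" and constp_0 [simp]: "constp 0 = 0"
  by (simp_all add: constp_def one_pCons)

lemma constp_eq_0_iff [simp]: "constp a = 0 \<longleftrightarrow> a = 0"
  by (simp add: constp_def)

lemma shiftXY_constp_mult: "shiftXY a b (constp c * f) = constp c * shiftXY a b f"
  by (simp add: shiftXY_def constp_mult_eq_smult map_poly_smult pcompose_mult pcompose_smult)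

lemma shiftXY_0_0 [simp]: "shiftXY 0 0 f = f"
  by (simp add: shiftXY_def map_poly_idI)

lemma shiftXY_1 [simp]: "shiftXY a b 1 = 1"
  by (simp add: shiftXY_def one_pCons map_poly_pCons)

lemma cxy_endo_eq_mult:
  fixes \<phi> :: "cxy \<Rightarrow> cxy"
  assumes add: "\<And>f g. \<phi> (f + g) = \<phi> f + \<phi> g"
    and homog: "\<And>c f. \<phi> (constp c * f) = constp c * \<phi> f"
    and X: "\<And>f. \<phi> (polyX * f) = polyX * \<phi> f"
    and Y: "\<And>f. \<phi> (polyY * f) = polyY * \<phi> f"
  shows "\<phi> f = f * \<phi> 1"
proof -
  have const: "\<phi> [:a:] = [:a:] * \<phi> 1" for a
  proof (induction a)
    case 0
    then show ?case using homog[of 0 1] by simp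
  next
    case (pCons c r)
    have split: "[:pCons c r:] = constp c * 1 + polyX * [:r:]"
      by (simp add: constp_def polyX_def one_pCons)
    show ?case
      unfolding split add homog X pCons.IH by (simp add: algebra_simps)
  qed
  show ?thesis
  proof (induction f)
    case 0
    then show ?case using const[of 0] by simp
  next
    case (pCons a q)
    have split: "pCons a q = [:a:] + polyY * q"
      by (simp add: polyY_def)
    show ?case
      unfolding split add const Y pCons.IH by (simp add: algebra_simps)
  qed
qed

lemma is_unit_cxy_iff: "is_unit (p :: cxy) \<longleftrightarrow> (\<exists>c. c \<noteq> 0 \<and> p = constp c)"
  by (auto simp: is_unit_poly_iff constp_def dvd_field_iff)

definition cartan_acts_by_XY :: "(gbasis \<Rightarrow> cxy \<Rightarrow> cxy) \<Rightarrow> bool" where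
  "cartan_acts_by_XY \<rho> \<longleftrightarrow> (\<forall>f. \<rho> (H 0) f = polyX * f) \<and> (\<forall>f. \<rho> (L 0) f = polyY * f)"

lemma gmod_iso_imp_eq_on_one:
  assumes iso: "gmod_iso \<rho>1 \<rho>2"
    and cartan: "cartan_acts_by_XY \<rho>1" "cartan_acts_by_XY \<rho>2"
    and homog: "\<And>b c f. \<rho>2 b (constp c * f) = constp c * \<rho>2 b f"
  shows "\<rho>1 b 1 = \<rho>2 b 1"
proof -
  obtain \<phi> where add: "\<And>f g. \<phi> (f + g) = \<phi> f + \<phi> g"
      and homog\<phi>: "\<And>c f. \<phi> (constp c * f) = constp c * \<phi> f"
      and "surj \<phi>"
      and intertw: "\<And>b f. \<phi> (\<rho>1 b f) = \<rho>2 b (\<phi> f)"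
    using iso unfolding gmod_iso_def bij_def by blast
  have mult: "\<phi> f = f * \<phi> 1" for f
  proof (rule cxy_endo_eq_mult[OF add homog\<phi>])
    show "\<phi> (polyX * f) = polyX * \<phi> f" for f
      using intertw[of "H 0" f] cartan by (simp add: cartan_acts_by_XY_def)
    show "\<phi> (polyY * f) = polyY * \<phi> f" for f
      using intertw[of "L 0" f] cartan by (simp add: cartan_acts_by_XY_def)
  qed
  obtain g where "\<phi> g = 1"
    using \<open>surj \<phi>\<close> by (metis surjD)
  then have "is_unit (\<phi> 1)"
    using mult[of g] by (metis dvdI mult.commute)
  then obtain c where "c \<noteq> 0" and c: "\<phi> 1 = constp c"
    by (auto simp: is_unit_cxy_iff)
  have "constp c * \<rho>1 b 1 = \<phi> (\<rho>1 b 1)"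
    using mult c by (simp add: mult.commute)
  also have "\<dots> = \<rho>2 b (constp c * 1)"
    using intertw c by simp
  also have "\<dots> = constp c * \<rho>2 b 1"
    by (rule homog)
  finally show ?thesis
    using \<open>c \<noteq> 0\<close> by simp
qed

lemma gmod_iso_refl: "gmod_iso \<rho> \<rho>"
  unfolding gmod_iso_def by (intro exI[of _ id]) auto

lemma omegaI_cartan: "cartan_acts_by_XY (omegaI lam eta sig)"
  and omegaJ_cartan: "cartan_acts_by_XY (omegaJ lam eta sig)"
  by (simp_all add: cartan_acts_by_XY_def omegaI_def omegaJ_def mult.commute)

lemma omegaI_constp_mult: "omegaI lam eta sig b (constp c * f) = constp c * omegaI lam eta sig b f"
  and omegaJ_constp_mult: "omegaJ lam eta sig b (constp c * f) = constp c * omegaJ lam eta sig b f"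
  by (cases b; simp add: omegaI_def omegaJ_def shiftXY_constp_mult mult.left_commute mult.assoc)+

lemma omegaI_on_one:
  "omegaI lam eta sig (H 1) 1 = [:[:0, lam:]:]"
  "omegaI lam eta sig (L 1) 1 = [:[:lam * eta, - lam:], [:lam:]:]"
  "omegaI lam eta sig (I 0) 1 = [:[:sig:]:]"
  by (simp_all add: omegaI_def constp_def polyX_def polyY_def)

lemma omegaJ_on_one:
  "omegaJ lam eta sig (H 1) 1 = [:[:0, lam:]:]"
  "omegaJ lam eta sig (L 1) 1 = [:[:lam * eta, lam:], [:lam:]:]"
  "omegaJ lam eta sig (I 0) 1 = 0"
  "omegaJ lam eta sig (J 0) 1 = [:[:sig:]:]"
  by (simp_all add: omegaJ_def constp_def polyX_def polyY_def)

lemma gmod_iso_omegaI_iff: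
  assumes "lam \<noteq> 0"
  shows "gmod_iso (omegaI lam eta sig) (omegaI lam1 eta1 sig1)
           \<longleftrightarrow> lam = lam1 \<and> eta = eta1 \<and> sig = sig1"
proof
  assume iso: "gmod_iso (omegaI lam eta sig) (omegaI lam1 eta1 sig1)"
  have on_one: "omegaI lam eta sig b 1 = omegaI lam1 eta1 sig1 b 1" for b
    using gmod_iso_imp_eq_on_one[OF iso omegaI_cartan omegaI_cartan omegaI_constp_mult] .
  have "lam = lam1"
    using on_one[of "H 1"] by (simp add: omegaI_on_one)
  moreover have "eta = eta1"
    using on_one[of "L 1"] \<open>lam = lam1\<close> assms by (simp add: omegaI_on_one)
  moreover have "sig = sig1"
    using on_one[of "I 0"] by (simp add: omegaI_on_one)
  ultimately show "lam = lam1 \<and> eta = eta1 \<and> sig = sig1"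
    by blast
qed (auto intro: gmod_iso_refl)

lemma gmod_iso_omegaJ_iff:
  assumes "lam \<noteq> 0"
  shows "gmod_iso (omegaJ lam eta sig) (omegaJ lam1 eta1 sig1)
           \<longleftrightarrow> lam = lam1 \<and> eta = eta1 \<and> sig = sig1"
proof
  assume iso: "gmod_iso (omegaJ lam eta sig) (omegaJ lam1 eta1 sig1)"
  have on_one: "omegaJ lam eta sig b 1 = omegaJ lam1 eta1 sig1 b 1" for b
    using gmod_iso_imp_eq_on_one[OF iso omegaJ_cartan omegaJ_cartan omegaJ_constp_mult] .
  have "lam = lam1"
    using on_one[of "H 1"] by (simp add: omegaJ_on_one)
  moreover have "eta = eta1"
    using on_one[of "L 1"] \<open>lam = lam1\<close> assms by (simp add: omegaJ_on_one)
  moreover have "sig = sig1"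
    using on_one[of "J 0"] by (simp add: omegaJ_on_one)
  ultimately show "lam = lam1 \<and> eta = eta1 \<and> sig = sig1"
    by blast
qed (auto intro: gmod_iso_refl)

lemma not_gmod_iso_omegaI_omegaJ:
  assumes "sig \<noteq> 0"
  shows "\<not> gmod_iso (omegaI lam eta sig) (omegaJ lam1 eta1 sig1)"
proof
  assume iso: "gmod_iso (omegaI lam eta sig) (omegaJ lam1 eta1 sig1)"
  have "omegaI lam eta sig (I 0) 1 = omegaJ lam1 eta1 sig1 (I 0) 1"
    using gmod_iso_imp_eq_on_one[OF iso omegaI_cartan omegaJ_cartan omegaJ_constp_mult] .
  then show False
    using assms by (simp add: omegaI_on_one omegaJ_on_one)
qed

theorem corollary4p4:
  fixes lam lam1 sig sig1 eta eta1 :: complex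
  assumes "lam \<noteq> 0" "lam1 \<noteq> 0" "sig \<noteq> 0" "sig1 \<noteq> 0"
  shows "(gmod_iso (omegaI lam eta sig) (omegaI lam1 eta1 sig1)
            \<longleftrightarrow> lam = lam1 \<and> eta = eta1 \<and> sig = sig1)
       \<and> (gmod_iso (omegaJ lam eta sig) (omegaJ lam1 eta1 sig1)
            \<longleftrightarrow> lam = lam1 \<and> eta = eta1 \<and> sig = sig1)
       \<and> \<not> gmod_iso (omegaI lam eta sig) (omegaJ lam1 eta1 sig1)"
  by (intro conjI gmod_iso_omegaI_iff[OF assms(1)] gmod_iso_omegaJ_iff[OF assms(1)]
      not_gmod_iso_omegaI_omegaJ[OF assms(3)])

end
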